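(* Let $\mathcal{A}$ be a unital $\mathbb{F}$-algebra of dimension $n>2$ having the maximal possible length $l(\mathcal{A})=2^{n-2}$. Then there exists a generating set $S$ of $\mathcal{A}$ whose characteristic sequence is $(0,1,2,4,\ldots,2^{n-2})$, i.e. $m_0=0$ and $m_h=2^{h-1}$ for $h=1,\ldots,n-1$.
   Context: Algebras are finite-dimensional, unital, not necessarily associative, over a field $\mathbb{F}$. For a finite generating set $S$ of $\mathcal{A}$, a word in $S$ is any product (with any bracketing) of finitely many elements of $S$; its length is the number of factors, and $1$ is a word of length $0$. $L_i(S)$ is the linear span of all words in $S$ of length at most $i$ (so $L_0(S)=\mathbb{F}$); $l(S)=\min\{k\ge0: L_k(S)=\mathcal{A}\}$ and $l(\mathcal{A})=\max\{l(S): S\text{ a finite generating set}\}$. It is known that $l(\mathcal{A})\le 2^{n-2}$ for unital algebras of dimension $n\ge2$, and this bound is attained. The characteristic sequence of $S$ is the non-decreasing sequence $(m_0,\ldots,m_{n-1})$ constructed as follows: $m_0=0$; with $s_1=\dim L_1(S)-1$, set $m_1=\cdots=m_{s_1}=1$; inductively, if $m_1,\ldots,m_r$ are defined using $L_1(S),\ldots,L_{k-1}(S)$, put $s_k=\dim L_k(S)-\dim L_{k-1}(S)$ and set $m_{r+1}=\cdots=m_{r+s_k}=k$. *)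

theory Defs
  imports Complex_Main
begin

definition unital_algebra ::
  "('f::field \<Rightarrow> 'v::ab_group_add \<Rightarrow> 'v) \<Rightarrow> ('v \<Rightarrow> 'v \<Rightarrow> 'v) \<Rightarrow> 'v \<Rightarrow> bool" where
  "unital_algebra scale mult one \<longleftrightarrow>
     vector_space scale \<and>
     (\<forall>a b c. mult (a + b) c = mult a c + mult b c) \<and>
     (\<forall>a b c. mult a (b + c) = mult a b + mult a c) \<and>
     (\<forall>r a b. mult (scale r a) b = scale r (mult a b)) \<and>
     (\<forall>r a b. mult a (scale r b) = scale r (mult a b)) \<and>
     (\<forall>a. mult one a = a \<and> mult a one = a)"

definition finite_dim ::
  "('f::field \<Rightarrow> 'v::ab_group_add \<Rightarrow> 'v) \<Rightarrow> bool" where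
  "finite_dim scale \<longleftrightarrow> (\<exists>B. finite B \<and> module.span scale B = UNIV)"

text \<open>is_word mult one S w k: w is (the value of) a word in S of length k,
  i.e. a product with some bracketing of k elements of S; one is the word of length 0.\<close>

inductive is_word :: "('v \<Rightarrow> 'v \<Rightarrow> 'v) \<Rightarrow> 'v \<Rightarrow> 'v set \<Rightarrow> 'v \<Rightarrow> nat \<Rightarrow> bool"
  for mult one S where
  empty: "is_word mult one S one 0"
| gen: "s \<in> S \<Longrightarrow> is_word mult one S s 1"
| prod: "is_word mult one S a i \<Longrightarrow> is_word mult one S b j \<Longrightarrow> i \<ge> 1 \<Longrightarrow> j \<ge> 1 \<Longrightarrow>
         is_word mult one S (mult a b) (i + j)"

definition Lsp ::
  "('f::field \<Rightarrow> 'v::ab_group_add \<Rightarrow> 'v) \<Rightarrow> ('v \<Rightarrow> 'v \<Rightarrow> 'v) \<Rightarrow> 'v \<Rightarrow> 'v set \<Rightarrow> nat \<Rightarrow> 'v set" where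
  "Lsp scale mult one S i = module.span scale {w. \<exists>k\<le>i. is_word mult one S w k}"

definition generating_set ::
  "('f::field \<Rightarrow> 'v::ab_group_add \<Rightarrow> 'v) \<Rightarrow> ('v \<Rightarrow> 'v \<Rightarrow> 'v) \<Rightarrow> 'v \<Rightarrow> 'v set \<Rightarrow> bool" where
  "generating_set scale mult one S \<longleftrightarrow> finite S \<and> (\<exists>k. Lsp scale mult one S k = UNIV)"

definition set_length ::
  "('f::field \<Rightarrow> 'v::ab_group_add \<Rightarrow> 'v) \<Rightarrow> ('v \<Rightarrow> 'v \<Rightarrow> 'v) \<Rightarrow> 'v \<Rightarrow> 'v set \<Rightarrow> nat" where
  "set_length scale mult one S = (LEAST k. Lsp scale mult one S k = UNIV)"

definition alg_length_is ::
  "('f::field \<Rightarrow> 'v::ab_group_add \<Rightarrow> 'v) \<Rightarrow> ('v \<Rightarrow> 'v \<Rightarrow> 'v) \<Rightarrow> 'v \<Rightarrow> nat \<Rightarrow> bool" where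
  "alg_length_is scale mult one k \<longleftrightarrow>
     (\<exists>S. generating_set scale mult one S \<and> set_length scale mult one S = k) \<and>
     (\<forall>S. generating_set scale mult one S \<longrightarrow> set_length scale mult one S \<le> k)"

text \<open>Characteristic sequence (m_0,...,m_{n-1}) as a list: m_0 = 0, followed for
  k = 1, ..., l(S) by s_k = dim L_k(S) - dim L_{k-1}(S) copies of k
  (note s_1 = dim L_1(S) - 1 since dim L_0(S) = 1).\<close>

definition char_seq ::
  "('f::field \<Rightarrow> 'v::ab_group_add \<Rightarrow> 'v) \<Rightarrow> ('v \<Rightarrow> 'v \<Rightarrow> 'v) \<Rightarrow> 'v \<Rightarrow> 'v set \<Rightarrow> nat list" where
  "char_seq scale mult one S =
     0 # concat (map (\<lambda>k. replicate (vector_space.dim scale (Lsp scale mult one S k)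
                                     - vector_space.dim scale (Lsp scale mult one S (k - 1))) k)
                     [1..<Suc (set_length scale mult one S)])"

end

theory Submission
  imports Defs
begin

text \<open>Let d(k) = dim L_k(S). Since L_p(S) L_q(S) \<subseteq> L_(p+q)(S), a space L_k(S) with k \<ge> 1
  and L_(2k)(S) = L_k(S) is closed under products and hence is the whole algebra; so
  d(k) < d(2k) whenever 1 \<le> k < l(S), and likewise d(0) < d(1). If l(S) = 2^(n-2), the chain
  d(1) < d(2) < d(4) < ... < d(2^(n-2)) = n starts at d(1) \<ge> 2 and must rise by exactly one
  at each step; doubling an arbitrary k until it passes 2^(n-2) then pins down
  d(k) = t + 2 for 2^t \<le> k < 2^(t+1). So the dimension jumps by one exactly at the powers
  of two, which is the claimed characteristic sequence.\<close>

lemma doubling_growth_determines_values: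
  fixes d :: "nat \<Rightarrow> nat"
  assumes mono: "mono d" and d1: "2 \<le> d 1"
    and doubling: "\<And>k. 1 \<le> k \<Longrightarrow> k < 2 ^ m \<Longrightarrow> d k < d (2 * k)"
    and bounded: "\<And>k. d k \<le> m + 2"
    and k: "2 ^ t \<le> k" "k < 2 ^ Suc t" "k \<le> 2 ^ m"
  shows "d k = t + 2"
proof -
  have iterated: "d i + j \<le> d (2 ^ j * i)" if "1 \<le> i" "2 ^ j * i \<le> 2 ^ m" for i j
    using that(2)
  proof (induction j)
    case 0
    then show ?case by simp
  next
    case (Suc j)
    have "2 ^ j * i < 2 ^ Suc j * i"
      using that(1) by simp
    then have "2 ^ j * i < 2 ^ m"
      using Suc.prems by linarith
    then show ?case
      using Suc.IH doubling[of "2 ^ j * i"] that(1) by (simp add: mult.assoc)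
  qed
  have "1 \<le> k"
    using k(1) order_trans[OF one_le_power[of "2::nat" t]] by simp
  have "t \<le> m"
    using k(1,3) power_increasing_iff[of "2::nat" t m] by linarith
  have "t + 2 \<le> d k"
  proof -
    have "d 1 + t \<le> d (2 ^ t)"
      using iterated[of 1 t] k by (simp add: \<open>t \<le> m\<close>)
    also have "\<dots> \<le> d k"
      using mono k(1) by (rule monoD)
    finally show ?thesis
      using d1 by simp
  qed
  moreover have "d k \<le> t + 2"
  proof (cases "t = m")
    case True
    then show ?thesis using bounded by simp
  next
    case False
    define j where "j = m - Suc t"
    have "2 ^ j * k < 2 ^ j * 2 ^ Suc t"
      using k(2) by simp
    also have "\<dots> = 2 ^ (j + Suc t)"
      by (simp only: power_add)
    also have "\<dots> = 2 ^ m"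
      using \<open>t \<le> m\<close> False by (simp add: j_def)
    finally have below: "2 ^ j * k < 2 ^ m" .
    have "d k + j \<le> d (2 ^ j * k)"
      using iterated \<open>1 \<le> k\<close> below by simp
    also have "\<dots> < d (2 * (2 ^ j * k))"
      using doubling \<open>1 \<le> k\<close> below by simp
    also have "\<dots> \<le> m + 2"
      by (rule bounded)
    finally show ?thesis
      using \<open>t \<le> m\<close> False by (simp add: j_def)
  qed
  ultimately show ?thesis
    by simp
qed

lemma concat_replicate_dyadic_increments:
  fixes d :: "nat \<Rightarrow> nat"
  assumes "d 0 = 1"
    and "\<And>t k. 2 ^ t \<le> k \<Longrightarrow> k < 2 ^ Suc t \<Longrightarrow> k \<le> 2 ^ m \<Longrightarrow> d k = t + 2"
  shows "concat (map (\<lambda>k. replicate (d k - d (k - 1)) k) [1..<Suc (2 ^ m)])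
    = map (\<lambda>h. 2 ^ (h - 1)) [1..<m + 2]"
  using assms(2)
proof (induction m)
  case 0
  have "d 1 = 2"
    using 0[of 0 1] by simp
  then show ?case
    using assms(1) by simp
next
  case (Suc m)
  let ?incr = "\<lambda>k. replicate (d k - d (k - 1)) k"
  have split: "[1..<Suc (2 ^ Suc m)] = [1..<Suc (2 ^ m)] @ [Suc (2 ^ m)..<2 ^ Suc m] @ [2 ^ Suc m]"
    using upt_add_eq_append[of 1 "Suc (2 ^ m)" "2 ^ m - 1"] by (simp add: mult_2 Suc_leI)
  have IH: "concat (map ?incr [1..<Suc (2 ^ m)]) = map (\<lambda>h. 2 ^ (h - 1)) [1..<m + 2]"
    using Suc.prems by (intro Suc.IH) auto
  have plateau: "concat (map ?incr [Suc (2 ^ m)..<2 ^ Suc m]) = []"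
    using Suc.prems[of m] by (auto simp: concat_eq_Nil_conv)
  have jump: "concat (map ?incr [2 ^ Suc m]) = [2 ^ Suc m]"
    using Suc.prems[of m "2 ^ Suc m - 1"] Suc.prems[of "Suc m" "2 ^ Suc m"] by simp
  have "concat (map ?incr [1..<Suc (2 ^ Suc m)]) = map (\<lambda>h. 2 ^ (h - 1)) [1..<m + 2] @ [2 ^ Suc m]"
    unfolding split map_append concat_append IH plateau jump by simp
  also have "\<dots> = map (\<lambda>h. 2 ^ (h - 1)) [1..<Suc m + 2]"
    by simp
  finally show ?case .
qed

locale unital_nonassoc_algebra = vector_space scale
  for scale :: "'f::field \<Rightarrow> 'v::ab_group_add \<Rightarrow> 'v" +
  fixes mult :: "'v \<Rightarrow> 'v \<Rightarrow> 'v" and one :: 'v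
  assumes unital_algebra: "unital_algebra scale mult one"
begin

abbreviation L :: "'v set \<Rightarrow> nat \<Rightarrow> 'v set" where
  "L \<equiv> Lsp scale mult one"

abbreviation words :: "'v set \<Rightarrow> nat \<Rightarrow> 'v set" where
  "words S i \<equiv> {w. \<exists>k\<le>i. is_word mult one S w k}"

lemma linear_mult_right: "Vector_Spaces.linear scale scale (mult a)"
  using unital_algebra unfolding unital_algebra_def Vector_Spaces.linear_iff by blast

lemma linear_mult_left: "Vector_Spaces.linear scale scale (\<lambda>a. mult a b)"
  using unital_algebra unfolding unital_algebra_def Vector_Spaces.linear_iff by blast

lemma one_mult [simp]: "mult one a = a"
  and mult_one [simp]: "mult a one = a"
  using unital_algebra unfolding unital_algebra_def by blast+

lemma mult_zero_left [simp]: "mult 0 b = 0"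
  using module_hom.zero[OF linear_mult_left[of b, folded module_hom_iff_linear]] .

lemma Lsp_eq_span_words: "L S i = span (words S i)"
  by (simp add: Lsp_def)

lemma is_word_0D: "is_word mult one S w 0 \<Longrightarrow> w = one"
  by (erule is_word.cases) auto

lemma Lsp_0: "L S 0 = span {one}"
proof -
  have "words S 0 = {one}"
    using is_word_0D is_word.empty by auto
  then show ?thesis
    by (simp add: Lsp_eq_span_words)
qed

lemma Lsp_mono: "i \<le> j \<Longrightarrow> L S i \<subseteq> L S j"
  unfolding Lsp_eq_span_words by (rule span_mono) (auto intro: le_trans)

lemma is_word_in_Lsp: "is_word mult one S w k \<Longrightarrow> k \<le> i \<Longrightarrow> w \<in> L S i"
  unfolding Lsp_eq_span_words by (rule span_base) auto

lemma words_mult_in_Lsp: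
  assumes "u \<in> words S p" "v \<in> words S q"
  shows "mult u v \<in> L S (p + q)"
proof -
  obtain i j where i: "i \<le> p" "is_word mult one S u i" and j: "j \<le> q" "is_word mult one S v j"
    using assms by blast
  consider "i = 0" | "j = 0" | "1 \<le> i" "1 \<le> j"
    by linarith
  then show ?thesis
  proof cases
    case 1
    then show ?thesis
      using i j is_word_0D[of S u] is_word_in_Lsp[of S v j] by simp
  next
    case 2
    then show ?thesis
      using i j is_word_0D[of S v] is_word_in_Lsp[of S u i] by simp
  next
    case 3
    then show ?thesis
      using is_word.prod[OF i(2) j(2)] i j is_word_in_Lsp by simp
  qed
qed

lemma Lsp_mult:
  assumes "a \<in> L S p" "b \<in> L S q"
  shows "mult a b \<in> L S (p + q)"
proof -
  have subspace: "subspace (L S (p + q))"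
    by (simp add: Lsp_eq_span_words)
  have words_mult: "mult u b \<in> L S (p + q)" if "u \<in> words S p" for u
  proof -
    interpret Vector_Spaces.linear scale scale "mult u"
      by (rule linear_mult_right)
    have "mult u ` words S q \<subseteq> L S (p + q)"
      using words_mult_in_Lsp[OF that] by blast
    then have "span (mult u ` words S q) \<subseteq> L S (p + q)"
      using subspace by (rule span_minimal)
    then show ?thesis
      using assms(2) by (auto simp: Lsp_eq_span_words span_image)
  qed
  interpret Vector_Spaces.linear scale scale "\<lambda>a. mult a b"
    by (rule linear_mult_left)
  have "span ((\<lambda>a. mult a b) ` words S p) \<subseteq> L S (p + q)"
    using words_mult subspace
    by (intro span_minimal) auto
  then show ?thesis
    using assms(1) by (auto simp: Lsp_eq_span_words span_image)
qed

lemma Lsp_stationary: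
  assumes "L S 1 \<subseteq> L S k" and "L S (2 * k) \<subseteq> L S k"
  shows "L S j \<subseteq> L S k"
proof -
  have "w \<in> L S k" if "is_word mult one S w i" for w i
    using that
  proof (induction rule: is_word.induct)
    case empty
    then show ?case
      using is_word_in_Lsp[OF is_word.empty] by simp
  next
    case (gen s)
    then show ?case
      using is_word_in_Lsp[OF is_word.gen[OF gen], of 1] assms(1) by auto
  next
    case (prod a i b j)
    then show ?case
      using Lsp_mult[OF prod.IH] assms(2) by (auto simp: mult_2)
  qed
  then show ?thesis
    unfolding Lsp_eq_span_words[of S j] by (intro span_minimal) (auto simp: Lsp_eq_span_words)
qed

lemma Lsp_set_length:
  assumes "generating_set scale mult one S"
  shows "L S (set_length scale mult one S) = UNIV"
proof -
  obtain k where "L S k = UNIV"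
    using assms unfolding generating_set_def by blast
  then show ?thesis
    unfolding set_length_def by (rule LeastI)
qed

lemma set_length_le_stationary:
  assumes "generating_set scale mult one S" "L S 1 \<subseteq> L S k" "L S (2 * k) \<subseteq> L S k"
  shows "set_length scale mult one S \<le> k"
proof -
  have "L S k = UNIV"
    using Lsp_stationary[OF assms(2,3), of "set_length scale mult one S"] Lsp_set_length[OF assms(1)]
    by auto
  then show ?thesis
    unfolding set_length_def by (rule Least_le)
qed

end

locale fin_dim_unital_nonassoc_algebra =
  unital_nonassoc_algebra scale mult one + finite_dimensional_vector_space scale Basis
  for scale :: "'f::field \<Rightarrow> 'v::ab_group_add \<Rightarrow> 'v" and mult one and Basis :: "'v set"
begin

lemma dim_Lsp_less:
  assumes "i \<le> j" "\<not> L S j \<subseteq> L S i"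
  shows "dim (L S i) < dim (L S j)"
proof -
  have "span (L S i) \<subset> span (L S j)"
    using assms Lsp_mono[of i j S] by (auto simp: Lsp_eq_span_words span_span)
  then show ?thesis
    by (rule dim_psubset)
qed

lemma dim_Lsp_0:
  assumes "dimension > 0"
  shows "dim (L S 0) = 1"
proof -
  have "one \<noteq> 0"
  proof
    assume "one = 0"
    then have "a = 0" for a :: 'v
      using one_mult[of a] mult_zero_left[of a] by simp
    then have "dim (UNIV :: 'v set) = 0"
      by (subst dim_eq_0) auto
    then show False
      using assms by (simp add: dimension_def)
  qed
  then show ?thesis
    by (simp add: Lsp_0)
qed

lemma dim_Lsp_doubling:
  assumes "generating_set scale mult one S" "1 \<le> k" "k < set_length scale mult one S"
  shows "dim (L S k) < dim (L S (2 * k))"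
proof (rule dim_Lsp_less)
  show "\<not> L S (2 * k) \<subseteq> L S k"
  proof
    assume "L S (2 * k) \<subseteq> L S k"
    with assms(1) Lsp_mono[OF assms(2)] have "set_length scale mult one S \<le> k"
      by (rule set_length_le_stationary)
    with assms(3) show False
      by simp
  qed
qed simp

lemma dim_Lsp_0_less_1:
  assumes "generating_set scale mult one S" "0 < set_length scale mult one S"
  shows "dim (L S 0) < dim (L S 1)"
proof (rule dim_Lsp_less)
  show "\<not> L S 1 \<subseteq> L S 0"
  proof
    assume "L S 1 \<subseteq> L S 0"
    with assms(1) have "set_length scale mult one S \<le> 0"
      by (rule set_length_le_stationary) simp
    with assms(2) show False
      by simp
  qed
qed simp

lemma char_seq_of_maximal_set_length:
  assumes S: "generating_set scale mult one S"
    and length: "set_length scale mult one S = 2 ^ m"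
    and dimension: "dimension = m + 2"
  shows "char_seq scale mult one S = 0 # map (\<lambda>h. 2 ^ (h - 1)) [1..<m + 2]"
proof -
  define d where "d k = dim (L S k)" for k
  have d0: "d 0 = 1"
    using dim_Lsp_0 dimension by (simp add: d_def)
  have dyadic: "d k = t + 2" if "2 ^ t \<le> k" "k < 2 ^ Suc t" "k \<le> 2 ^ m" for t k
  proof (rule doubling_growth_determines_values[OF _ _ _ _ that])
    show "mono d"
      unfolding d_def by (intro monoI dim_subset Lsp_mono)
    show "2 \<le> d 1"
      using dim_Lsp_0_less_1[OF S] length d0 by (simp add: d_def)
    show "d k < d (2 * k)" if "1 \<le> k" "k < 2 ^ m" for k
      using dim_Lsp_doubling[OF S that(1)] that(2) length by (simp add: d_def)
    show "d k \<le> m + 2" for k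
      using dim_subset_UNIV dimension by (simp add: d_def)
  qed
  have "concat (map (\<lambda>k. replicate (d k - d (k - 1)) k) [1..<Suc (2 ^ m)])
      = map (\<lambda>h. 2 ^ (h - 1)) [1..<m + 2]"
    using d0 dyadic by (rule concat_replicate_dyadic_increments)
  then show ?thesis
    unfolding char_seq_def length d_def by simp
qed

end

lemma finite_dim_obtains_basis:
  assumes "vector_space scale" "finite_dim scale"
  obtains B where "finite_dimensional_vector_space scale B"
proof -
  interpret vector_space scale by fact
  obtain B0 where "finite B0" "span B0 = UNIV"
    using assms(2) unfolding finite_dim_def by blast
  moreover obtain B where "independent B" "span B = UNIV"
    using basis_exists[of UNIV] by (metis span_UNIV span_eq top.extremum_unique)
  ultimately have "finite B"
    using independent_span_bound[of B0 B] by blast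
  with \<open>independent B\<close> \<open>span B = UNIV\<close> show thesis
    by (intro that) unfold_locales
qed

theorem proposition6p1:
  fixes scale :: "'f::field \<Rightarrow> 'v::ab_group_add \<Rightarrow> 'v"
    and mult :: "'v \<Rightarrow> 'v \<Rightarrow> 'v"
    and one :: 'v
    and n :: nat
  assumes "unital_algebra scale mult one"
    and "finite_dim scale"
    and "n = vector_space.dim scale (UNIV :: 'v set)"
    and "n > 2"
    and "alg_length_is scale mult one (2 ^ (n - 2))"
  shows "\<exists>S. generating_set scale mult one S \<and>
             char_seq scale mult one S = 0 # map (\<lambda>h. 2 ^ (h - 1)) [1..<n]"
proof -
  have "vector_space scale"
    using assms(1) unfolding unital_algebra_def by blast
  then obtain B where "finite_dimensional_vector_space scale B"
    using assms(2) by (rule finite_dim_obtains_basis)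
  then interpret fin_dim_unital_nonassoc_algebra scale mult one B
    using assms(1) by (simp add: fin_dim_unital_nonassoc_algebra_def unital_nonassoc_algebra_def
        unital_nonassoc_algebra_axioms_def \<open>vector_space scale\<close>)
  define m where "m = n - 2"
  have n: "n = m + 2"
    using assms(4) by (simp add: m_def)
  obtain S where S: "generating_set scale mult one S" "set_length scale mult one S = 2 ^ m"
    using assms(5) unfolding alg_length_is_def m_def by blast
  have "dimension = m + 2"
    using assms(3) n by (simp add: dimension_def)
  with S have "char_seq scale mult one S = 0 # map (\<lambda>h. 2 ^ (h - 1)) [1..<n]"
    unfolding n by (rule char_seq_of_maximal_set_length)
  with S(1) show ?thesis
    by blast
qed

end
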